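(* Let $n\ge 1$ and let $T_n$ be the $n\times n$ tridiagonal matrix with diagonal entries $(T_n)_{ii}=1$ for $1\le i\le n$, superdiagonal entries $(T_n)_{i,i+1}=i$ and subdiagonal entries $(T_n)_{i+1,i}=n-i$ for $1\le i\le n-1$, and all other entries $0$. Then $$\det(T_n)=\begin{cases}0 & \text{if } n \text{ is even},\\[4pt] \dfrac{(-1)^{\frac{n-1}{2}}\, n!}{2^{n-1}}\dbinom{n-1}{\frac{n-1}{2}} & \text{if } n \text{ is odd}.\end{cases}$$ *)

theory Defs
  imports "Jordan_Normal_Form.Determinant"
begin

text \<open>The n x n tridiagonal matrix T_n, 0-indexed: paper entry (i+1, j+1) is entry (i, j) here.
  Diagonal 1; superdiagonal (paper (i,i+1) = i) becomes entry (r, r+1) = r+1;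
  subdiagonal (paper (i+1,i) = n-i) becomes entry (r, r-1) = n - r.\<close>
definition T_mat :: "nat \<Rightarrow> real mat" where
  "T_mat n = mat n n (\<lambda>(r, c).
      if r = c then 1
      else if c = r + 1 then real (r + 1)
      else if r = c + 1 then real n - real r
      else 0)"

end

theory Submission imports Defs begin

text \<open>Conjugating \<open>T\<^sub>n\<close> by the upper triangular Pascal matrix \<open>B = (binom c r)\<^sub>r\<^sub>,\<^sub>c\<close>
  makes it lower bidiagonal: \<open>T\<^sub>n B = B M\<close>, where \<open>M\<close> has diagonal entries \<open>2c + 2 - n\<close>
  (\<open>0 \<le> c < n\<close>), i.e. the eigenvalues \<open>-n + 2, -n + 4, \<dots>, n\<close> of \<open>T\<^sub>n\<close>. Entrywise this is
  Pascal's rule combined with the absorption identity \<open>(k+1) binom c (k+1) = (c-k) binom c k\<close>.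
  As \<open>det B = 1\<close>, \<open>det T\<^sub>n\<close> is the product of these eigenvalues. For even \<open>n\<close> one of them
  is \<open>0\<close>; for \<open>n = 2m + 1\<close> they are the odd numbers from \<open>-(2m - 1)\<close> to \<open>2m + 1\<close>, with
  product \<open>(-1)\<^sup>m (2m + 1) ((2m - 1)!!)\<^sup>2\<close>.\<close>

lemma binomial_Suc_absorb_real:
  "real (Suc k) * real (c choose Suc k) = (real c - real k) * real (c choose k)"
proof (cases "k \<le> c")
  case True
  have "real (Suc k * (c choose Suc k)) = real ((c - k) * (c choose k))"
    by (metis binomial_absorb_comp binomial_absorption)
  then show ?thesis using True by (simp add: of_nat_diff algebra_simps)
next
  case False
  then show ?thesis by (simp add: binomial_eq_0)
qed

definition pascal_mat :: "nat \<Rightarrow> 'a :: comm_ring_1 mat" where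
  "pascal_mat n = mat n n (\<lambda>(r, c). of_nat (c choose r))"

definition T_bidiag :: "nat \<Rightarrow> real mat" where
  "T_bidiag n = mat n n (\<lambda>(r, c).
      if r = c then 2 * real c + 2 - real n
      else if r = c + 1 then real n - 1 - real c
      else 0)"

lemma det_pascal_mat: "det (pascal_mat n) = 1"
proof -
  have "det (pascal_mat n) = prod_list (diag_mat (pascal_mat n))"
    by (rule det_upper_triangular[of _ n])
      (auto simp: pascal_mat_def upper_triangular_def binomial_eq_0)
  also have "\<dots> = 1"
    by (simp add: prod_list_diag_prod pascal_mat_def)
  finally show ?thesis .
qed

lemma det_T_bidiag: "det (T_bidiag n) = (\<Prod>c = 0..<n. 2 * real c + 2 - real n)"
proof -
  have "det (T_bidiag n) = prod_list (diag_mat (T_bidiag n))"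
    by (rule det_lower_triangular[of n]) (auto simp: T_bidiag_def)
  also have "\<dots> = (\<Prod>c = 0..<n. 2 * real c + 2 - real n)"
    by (simp add: prod_list_diag_prod T_bidiag_def)
  finally show ?thesis .
qed

lemma T_pascal_entry_identity:
  "real (c choose r) + real (Suc r) * real (c choose Suc r)
     + (if r = 0 then 0 else (real n - real r) * real (c choose (r - 1)))
   = (2 * real c + 2 - real n) * real (c choose r)
     + (real n - 1 - real c) * real (Suc c choose r)"
proof (cases r)
  case 0
  then show ?thesis by (simp add: binomial_Suc_absorb_real algebra_simps)
next
  case (Suc s)
  then show ?thesis
    using binomial_Suc_absorb_real[of s c] binomial_Suc_absorb_real[of "Suc s" c]
    by (simp add: algebra_simps)
qed

lemma T_mat_pascal_conj: "T_mat n * pascal_mat n = pascal_mat n * T_bidiag n"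
proof (rule eq_matI)
  fix r c
  assume "r < dim_row (pascal_mat n * T_bidiag n)" "c < dim_col (pascal_mat n * T_bidiag n)"
  then have r: "r < n" and c: "c < n"
    by (auto simp: pascal_mat_def T_bidiag_def)
  have "(T_mat n * pascal_mat n) $$ (r, c) = (\<Sum>k = 0..<n.
      (if k = r then real (c choose r) else 0)
      + (if k = Suc r then real (Suc r) * real (c choose Suc r) else 0)
      + (if r \<noteq> 0 \<and> k = r - 1 then (real n - real r) * real (c choose (r - 1)) else 0))"
    using r c unfolding T_mat_def pascal_mat_def
    by (auto simp: scalar_prod_def intro!: sum.cong)
  also have "\<dots> = real (c choose r) + real (Suc r) * real (c choose Suc r)
     + (if r = 0 then 0 else (real n - real r) * real (c choose (r - 1)))"
  proof -
    have "n \<le> Suc r \<Longrightarrow> c choose Suc r = 0"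
      using c by (simp add: binomial_eq_0)
    then show ?thesis
      using r by (cases r) (auto simp: sum.distrib)
  qed
  also have "\<dots> = (2 * real c + 2 - real n) * real (c choose r)
      + (real n - 1 - real c) * real (Suc c choose r)"
    by (rule T_pascal_entry_identity)
  also have "\<dots> = (\<Sum>k = 0..<n.
      (if k = c then (2 * real c + 2 - real n) * real (c choose r) else 0)
      + (if k = Suc c then (real n - 1 - real c) * real (Suc c choose r) else 0))"
  proof -
    have "n \<le> Suc c \<Longrightarrow> real n - 1 - real c = 0"
      using c by simp
    then show ?thesis
      using c by (simp add: sum.distrib)
  qed
  also have "\<dots> = (pascal_mat n * T_bidiag n) $$ (r, c)"
    using r c unfolding pascal_mat_def T_bidiag_def
    by (auto simp: scalar_prod_def intro!: sum.cong)
  finally show "(T_mat n * pascal_mat n) $$ (r, c) = (pascal_mat n * T_bidiag n) $$ (r, c)" .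
qed (auto simp: T_mat_def pascal_mat_def T_bidiag_def)

lemma det_T_mat_eq_det_T_bidiag: "det (T_mat n) = det (T_bidiag n)"
proof -
  have carrier: "T_mat n \<in> carrier_mat n n" "pascal_mat n \<in> carrier_mat n n"
      "T_bidiag n \<in> carrier_mat n n"
    by (auto simp: T_mat_def pascal_mat_def T_bidiag_def)
  have "det (T_mat n) = det (T_mat n * pascal_mat n)"
    by (simp add: det_mult[OF carrier(1,2)] det_pascal_mat)
  also have "\<dots> = det (pascal_mat n * T_bidiag n)"
    by (simp add: T_mat_pascal_conj)
  also have "\<dots> = det (T_bidiag n)"
    by (simp add: det_mult[OF carrier(2,3)] det_pascal_mat)
  finally show ?thesis .
qed

lemma prod_odd_numbers: "2 ^ m * fact m * (\<Prod>k<m. 2 * real k + 1) = fact (2 * m)"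
proof (induction m)
  case (Suc m)
  have "2 ^ Suc m * fact (Suc m) * (\<Prod>k<Suc m. 2 * real k + 1)
      = (2 * real m + 2) * (2 * real m + 1) * (2 ^ m * fact m * (\<Prod>k<m. 2 * real k + 1))"
    by (simp add: algebra_simps)
  also have "\<dots> = (2 * real m + 2) * (2 * real m + 1) * fact (2 * m)"
    by (simp only: Suc.IH)
  also have "\<dots> = fact (2 * Suc m)"
    by (simp add: algebra_simps)
  finally show ?case .
qed simp

lemma prod_odd_numbers_centered:
  "(\<Prod>c<2 * m + 1. 2 * real c + 1 - 2 * real m)
     = (-1) ^ m * (2 * real m + 1) * (\<Prod>k<m. 2 * real k + 1) ^ 2"
proof -
  let ?f = "\<lambda>c. 2 * real c + 1 - 2 * real m"
  have negative: "(\<Prod>c<m. ?f c) = (-1) ^ m * (\<Prod>k<m. 2 * real k + 1)"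
  proof -
    have "(\<Prod>c<m. ?f c) = (\<Prod>k<m. ?f (m - Suc k))"
      by (rule prod.nat_diff_reindex[symmetric])
    also have "\<dots> = (\<Prod>k<m. - (2 * real k + 1))"
      by (intro prod.cong) (auto simp: of_nat_diff)
    also have "\<dots> = (-1) ^ m * (\<Prod>k<m. 2 * real k + 1)"
      by (subst prod_uminus) simp
    finally show ?thesis .
  qed
  have positive: "(\<Prod>k<m + 1. ?f (m + k)) = (2 * real m + 1) * (\<Prod>k<m. 2 * real k + 1)"
    by (simp add: algebra_simps)
  have "(\<Prod>c<2 * m + 1. ?f c) = (\<Prod>c<m. ?f c) * (\<Prod>k<m + 1. ?f (m + k))"
    using prod.atLeastLessThan_concat[of 0 m "2 * m + 1" ?f]
    by (simp add: prod.atLeastLessThan_shift_0[of ?f m] lessThan_atLeast0 comp_def)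
  then show ?thesis
    using negative positive by (simp add: power2_eq_square)
qed

lemma prod_T_bidiag_diagonal:
  assumes "n \<ge> 1"
  shows "(\<Prod>c = 0..<n. 2 * real c + 2 - real n) =
    (if even n then 0
     else (-1) ^ ((n - 1) div 2) * fact n / 2 ^ (n - 1) * real ((n - 1) choose ((n - 1) div 2)))"
proof (cases "even n")
  case True
  then obtain m where "n = 2 * m" by blast
  with assms have "m - 1 \<in> {0..<n}" "2 * real (m - 1) + 2 - real n = 0"
    by auto
  then show ?thesis
    using True by (metis prod_zero_iff finite_atLeastLessThan)
next
  case False
  then obtain m where m: "n = 2 * m + 1" by (blast elim: oddE)
  let ?P = "\<Prod>k<m. 2 * real k + 1"
  have "(\<Prod>c = 0..<n. 2 * real c + 2 - real n) = (\<Prod>c<2 * m + 1. 2 * real c + 1 - 2 * real m)"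
    unfolding m lessThan_atLeast0 by (intro prod.cong) auto
  also have "\<dots> = (-1) ^ m * ((2 * real m + 1) * ?P ^ 2)"
    by (simp only: prod_odd_numbers_centered mult.assoc)
  also have "(2 * real m + 1) * ?P ^ 2 = fact (2 * m + 1) / 2 ^ (2 * m) * real (2 * m choose m)"
  proof -
    have "fact (2 * m + 1) / 2 ^ (2 * m) * real (2 * m choose m)
        = (2 * real m + 1) * (fact (2 * m) / (2 ^ m * fact m)) ^ 2"
      by (simp add: binomial_fact power_mult power2_eq_square field_simps)
    then show ?thesis
      by (simp flip: prod_odd_numbers)
  qed
  finally show ?thesis
    using m by simp
qed

theorem mainTheorem4:
  fixes n :: nat
  assumes "n \<ge> 1"
  shows "det (T_mat n) =
    (if even n then 0
     else (-1) ^ ((n - 1) div 2) * fact n / 2 ^ (n - 1) * real ((n - 1) choose ((n - 1) div 2)))"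
  using prod_T_bidiag_diagonal[OF assms]
  by (simp add: det_T_mat_eq_det_T_bidiag det_T_bidiag)

end
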